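(* Let $q=2^h$, let $A,B,C,D\in\mathbb F_{q^4}$ with $B\ne 0$ and $B^{q^2}=1/B$, and let $$\Lambda=\{(u,v)\in\mathbb F_{q^4}^2 : v^{q^2}+Au+Bv+u^q=0,\ v^{q^2}+u^{q^2}+v^q+Cu+Dv=0\}.$$ Then $\#\Lambda\le q^3$. *)

theory Defs
  imports Main
begin

end

theory Submission
  imports Defs "HOL-Number_Theory.Residues" "HOL-Computational_Algebra.Polynomial"
begin

(* Write E = B + D and F = A + C. Adding the two equations, raising the sum to the q-th power
   and combining gives (B + E^(q+1)) v + P(u) = 0, and raising the first equation to the q^2-th
   power (using B^(q^2) = 1/B and x^(q^4) = x) eliminates v completely: S(u) = 0, where P and S
   are linearized polynomials of q-degree 3 and S has leading coefficient B. If
   B + E^(q+1) \<noteq> 0, then v is determined by u, which leaves at most deg S = q^3 solutions.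
   Otherwise u is a root of B P + S, of q-degree at most 2, and for each u the sum of the two
   equations leaves at most q values of v, provided B P + S \<noteq> 0. That it is nonzero is the
   heart of the matter: otherwise E and its conjugates satisfy a system forcing B^2 + B + 1 = 0,
   and a cube root of unity is fixed by x \<mapsto> x^(q^2) because q^2 = 4^h \<equiv> 1 (mod 3),
   contradicting B^(q^2) = 1/B. *)

lemma CHAR_2_two_eq_0: "CHAR('a::semiring_1) = 2 \<Longrightarrow> (2::'a) = 0"
  by (metis of_nat_CHAR of_nat_numeral)

lemma CHAR_2_add_eq_0_iff:
  fixes x y :: "'a::ring_1"
  assumes "CHAR('a) = 2"
  shows "x + y = 0 \<longleftrightarrow> x = y"
  using assms by (metis add_eq_0_iff2 uminus_CHAR_2)

lemma CHAR_2_add_eq_iff: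
  fixes x y z :: "'a::ring_1"
  assumes "CHAR('a) = 2"
  shows "x + y = z \<longleftrightarrow> x = z + y"
  using assms by (metis eq_diff_eq minus_CHAR_2)

lemma CHAR_eq_2_if_card_UNIV_power_2:
  assumes "card (UNIV :: 'a::{field, finite} set) = 2 ^ k"
  shows "CHAR('a) = 2"
proof -
  have "prime CHAR('a)"
    by (intro prime_CHAR_semidom finite_imp_CHAR_pos) simp
  moreover have "CHAR('a) dvd 2 ^ k"
    using CHAR_dvd_CARD[where 'a = 'a] assms by simp
  ultimately show ?thesis
    by (metis prime_dvd_power primes_dvd_imp_eq two_is_prime_nat)
qed

lemma freshmans_dream_2_pow:
  fixes x y :: "'a::comm_semiring_1"
  assumes "CHAR('a) = 2" and "q = 2 ^ h"
  shows "(x + y) ^ q ^ n = x ^ q ^ n + y ^ q ^ n"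
  using assms by (intro freshmans_dream'[where n = "h * n"]) (simp_all add: power_mult)

(* The library's finite_field_power_card_eq_same is stated for the class finite_field, which
   does not cover a type variable of sort {field, finite}. *)
lemma finite_field_power_card_eq_self:
  fixes x :: "'a::{field, finite}"
  shows "x ^ card (UNIV :: 'a set) = x"
proof -
  let ?U = "UNIV - {0::'a}"
  have card_UNIV: "card (UNIV :: 'a set) = Suc (card ?U)"
    using finite_UNIV_card_ge_0[where 'a = 'a, OF finite_UNIV] card_Diff_singleton[OF UNIV_I, of "0::'a"]
    by linarith
  have "x ^ card ?U = 1" if "x \<noteq> 0"
  proof -
    have "\<Prod>?U = (\<Prod>y\<in>?U. x * y)"
      by (rule prod.reindex_bij_witness[of _ "\<lambda>y. x * y" "\<lambda>y. y / x"]) (use that in auto)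
    also have "\<dots> = x ^ card ?U * \<Prod>?U"
      by (simp add: prod.distrib)
    finally show ?thesis
      by simp
  qed
  then show ?thesis
    unfolding card_UNIV by (cases "x = 0") simp_all
qed

lemma power_power_pow:
  fixes x :: "'a::monoid_mult"
  shows "(x ^ q ^ m) ^ q ^ n = x ^ q ^ (m + n)" and "(x ^ q) ^ q ^ n = x ^ q ^ Suc n"
    and "(x ^ q ^ m) ^ q = x ^ q ^ Suc m" and "(x ^ q) ^ q = x ^ q ^ 2"
  by (simp_all only: power_mult[symmetric] power_add power_Suc power2_eq_square mult.commute)

lemma power_pow_reduce:
  fixes x :: "'a::monoid_mult"
  assumes "\<And>x::'a. x ^ q ^ 4 = x"
  shows "x ^ q ^ 5 = x ^ q" and "x ^ q ^ 6 = x ^ q ^ 2" and "x ^ q ^ 7 = x ^ q ^ 3"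
  using power_power_pow(1)[of x q 4 1] power_power_pow(1)[of x q 4 2] power_power_pow(1)[of x q 4 3]
  by (simp_all add: assms)

definition linearized_poly :: "nat \<Rightarrow> 'a::comm_semiring_1 list \<Rightarrow> 'a poly" where
  "linearized_poly q cs = (\<Sum>i<length cs. monom (cs ! i) (q ^ i))"

lemma poly_linearized_poly:
  "poly (linearized_poly q cs) x = (\<Sum>i<length cs. cs ! i * x ^ q ^ i)"
  by (simp add: linearized_poly_def poly_sum poly_monom)

lemma coeff_linearized_poly:
  assumes "1 < q" and "i < length cs"
  shows "coeff (linearized_poly q cs) (q ^ i) = cs ! i"
proof -
  have "coeff (linearized_poly q cs) (q ^ i) = (\<Sum>j<length cs. if q ^ j = q ^ i then cs ! j else 0)"
    by (simp add: linearized_poly_def coeff_sum coeff_monom)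
  also have "\<dots> = (\<Sum>j<length cs. if j = i then cs ! j else 0)"
    using assms(1) by (simp add: power_inject_exp)
  also have "\<dots> = cs ! i"
    using assms(2) by simp
  finally show ?thesis .
qed

lemma degree_linearized_poly_le:
  assumes "0 < q"
  shows "degree (linearized_poly q cs) \<le> q ^ (length cs - 1)"
  unfolding linearized_poly_def
proof (rule degree_sum_le)
  fix i assume "i \<in> {..<length cs}"
  then have "q ^ i \<le> q ^ (length cs - 1)"
    using assms by (intro power_increasing) auto
  then show "degree (monom (cs ! i) (q ^ i)) \<le> q ^ (length cs - 1)"
    using degree_monom_le order_trans by blast
qed simp

lemma card_linearized_poly_roots_le:
  fixes cs :: "'a::idom list"
  assumes "1 < q" and "\<exists>c\<in>set cs. c \<noteq> 0"
  shows "card {x. poly (linearized_poly q cs) x = 0} \<le> q ^ (length cs - 1)"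
proof -
  obtain i where "i < length cs" "cs ! i \<noteq> 0"
    using assms(2) by (auto simp: in_set_conv_nth)
  then have "linearized_poly q cs \<noteq> 0"
    using coeff_linearized_poly[OF assms(1)] by (metis coeff_0)
  then have "card {x. poly (linearized_poly q cs) x = 0} \<le> degree (linearized_poly q cs)"
    by (rule card_poly_roots_bound)
  also have "\<dots> \<le> q ^ (length cs - 1)"
    using assms(1) by (intro degree_linearized_poly_le) simp
  finally show ?thesis .
qed

lemma card_roots_monic_le:
  fixes p :: "'a::idom poly"
  assumes "degree p < n"
  shows "card {x. x ^ n + poly p x = 0} \<le> n"
proof -
  have deg: "degree (monom 1 n + p) = n"
    using assms by (simp add: degree_add_eq_left degree_monom_eq)
  then have "monom 1 n + p \<noteq> 0"
    using assms by auto
  from card_poly_roots_bound[OF this] show ?thesis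
    by (simp add: deg poly_monom)
qed

lemma card_affine_roots_le:
  fixes k c :: "'a::field"
  assumes "k \<noteq> 0"
  shows "card {v. k * v + c = 0} \<le> 1"
proof -
  have "{v. k * v + c = 0} = {- c / k}"
    using assms by (auto simp: field_simps add_eq_0_iff)
  then show ?thesis
    by simp
qed

lemma card_pairs_le:
  fixes P :: "'a::finite \<Rightarrow> bool" and Q :: "'a \<Rightarrow> 'b::finite \<Rightarrow> bool"
  assumes "\<And>u. P u \<Longrightarrow> card {v. Q u v} \<le> m"
  shows "card {(u, v). P u \<and> Q u v} \<le> card {u. P u} * m"
proof -
  have "{(u, v). P u \<and> Q u v} = Sigma {u. P u} (\<lambda>u. {v. Q u v})"
    by auto
  then have "card {(u, v). P u \<and> Q u v} = (\<Sum>u | P u. card {v. Q u v})"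
    by (simp add: card_SigmaI)
  also have "\<dots> \<le> card {u. P u} * m"
    using sum_bounded_above[of "{u. P u}" "\<lambda>u. card {v. Q u v}" m] assms by simp
  finally show ?thesis .
qed

lemma card_linearized_graph_le:
  fixes cs :: "'a::{field, finite} list" and k :: 'a and f :: "'a \<Rightarrow> 'a"
  assumes "1 < q" and "\<exists>c\<in>set cs. c \<noteq> 0" and "k \<noteq> 0"
  shows "card {(u, v). poly (linearized_poly q cs) u = 0 \<and> k * v + f u = 0} \<le> q ^ (length cs - 1)"
proof -
  have "card {(u, v). poly (linearized_poly q cs) u = 0 \<and> k * v + f u = 0}
      \<le> card {u. poly (linearized_poly q cs) u = 0} * 1"
    by (rule card_pairs_le) (rule card_affine_roots_le[OF assms(3)])
  with card_linearized_poly_roots_le[OF assms(1,2)] show ?thesis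
    by simp
qed

lemma card_linearized_fibred_le:
  fixes cs :: "'a::{idom, finite} list" and g :: "'a \<Rightarrow> 'a poly"
  assumes "1 < q" and "\<exists>c\<in>set cs. c \<noteq> 0" and "\<And>u. degree (g u) < q"
  shows "card {(u, v). poly (linearized_poly q cs) u = 0 \<and> v ^ q + poly (g u) v = 0}
    \<le> q ^ (length cs - 1) * q"
proof -
  have "card {(u, v). poly (linearized_poly q cs) u = 0 \<and> v ^ q + poly (g u) v = 0}
      \<le> card {u. poly (linearized_poly q cs) u = 0} * q"
    by (intro card_pairs_le card_roots_monic_le assms(3))
  with card_linearized_poly_roots_le[OF assms(1,2)] show ?thesis
    by (meson le_trans mult_le_mono1)
qed

definition solution_set :: "nat \<Rightarrow> 'a::comm_ring_1 \<Rightarrow> 'a \<Rightarrow> 'a \<Rightarrow> 'a \<Rightarrow> ('a \<times> 'a) set" where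
  "solution_set q A B C D = {(u, v). v ^ q ^ 2 + A * u + B * v + u ^ q = 0
                                   \<and> v ^ q ^ 2 + u ^ q ^ 2 + v ^ q + C * u + D * v = 0}"

lemma solution_sum_equation:
  fixes A B C D E F u v :: "'a::comm_ring_1"
  assumes char: "CHAR('a) = 2" and E: "E = B + D" and F: "F = A + C"
    and eq1: "v ^ q ^ 2 + A * u + B * v + u ^ q = 0"
    and eq2: "v ^ q ^ 2 + u ^ q ^ 2 + v ^ q + C * u + D * v = 0"
  shows "v ^ q + E * v + (u ^ q ^ 2 + u ^ q + F * u) = 0"
proof -
  have "(v ^ q ^ 2 + A * u + B * v + u ^ q) + (v ^ q ^ 2 + u ^ q ^ 2 + v ^ q + C * u + D * v)
      = v ^ q + E * v + (u ^ q ^ 2 + u ^ q + F * u) + 2 * v ^ q ^ 2"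
    by (simp add: E F algebra_simps)
  then show ?thesis
    using eq1 eq2 CHAR_2_two_eq_0[OF char] by simp
qed

lemma solution_linear_in_v:
  fixes A B E F u v :: "'a::comm_ring_1"
  assumes char: "CHAR('a) = 2" and q: "q = 2 ^ h"
    and eq1: "v ^ q ^ 2 + A * u + B * v + u ^ q = 0"
    and eq: "v ^ q + E * v + (u ^ q ^ 2 + u ^ q + F * u) = 0"
  shows "(B + E ^ (q + 1)) * v
      + poly (linearized_poly q [E ^ q * F + A, F ^ q + E ^ q + 1, 1 + E ^ q, 1]) u = 0"
proof -
  have "(v ^ q + E * v + (u ^ q ^ 2 + u ^ q + F * u)) ^ q = 0"
    using eq q by (simp add: zero_power)
  then have eq_frob: "v ^ q ^ 2 + E ^ q * v ^ q + (u ^ q ^ 3 + u ^ q ^ 2 + F ^ q * u ^ q) = 0"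
    using freshmans_dream_2_pow[OF char q, of _ _ 1]
    by (simp add: power_mult_distrib power_power_pow)
  have "(v ^ q ^ 2 + A * u + B * v + u ^ q)
        + (v ^ q ^ 2 + E ^ q * v ^ q + (u ^ q ^ 3 + u ^ q ^ 2 + F ^ q * u ^ q))
        + E ^ q * (v ^ q + E * v + (u ^ q ^ 2 + u ^ q + F * u))
      = (B + E ^ (q + 1)) * v + poly (linearized_poly q [E ^ q * F + A, F ^ q + E ^ q + 1, 1 + E ^ q, 1]) u
        + 2 * (v ^ q ^ 2 + E ^ q * v ^ q)"
    by (simp add: poly_linearized_poly eval_nat_numeral algebra_simps)
  then show ?thesis
    using eq1 eq_frob eq CHAR_2_two_eq_0[OF char] by simp
qed

lemma solution_free_of_v:
  fixes A B u v :: "'a::field"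
  assumes char: "CHAR('a) = 2" and q: "q = 2 ^ h" and fermat: "\<And>x::'a. x ^ q ^ 4 = x"
    and B: "B * B ^ q ^ 2 = 1"
    and eq: "v ^ q ^ 2 + A * u + B * v + u ^ q = 0"
  shows "poly (linearized_poly q [A, 1, B * A ^ q ^ 2, B]) u = 0"
proof -
  have "(v ^ q ^ 2 + A * u + B * v + u ^ q) ^ q ^ 2 = 0"
    using eq q by simp
  then have "v + A ^ q ^ 2 * u ^ q ^ 2 + B ^ q ^ 2 * v ^ q ^ 2 + u ^ q ^ 3 = 0"
    by (simp only: freshmans_dream_2_pow[OF char q] power_mult_distrib power_power_pow)
      (simp add: fermat)
  then have "B * (v + A ^ q ^ 2 * u ^ q ^ 2 + B ^ q ^ 2 * v ^ q ^ 2 + u ^ q ^ 3) = 0"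
    by simp
  then have eq_conj: "B * v + B * A ^ q ^ 2 * u ^ q ^ 2 + v ^ q ^ 2 + B * u ^ q ^ 3 = 0"
    by (simp add: distrib_left mult.assoc[symmetric] B)
  have "(v ^ q ^ 2 + A * u + B * v + u ^ q) + (B * v + B * A ^ q ^ 2 * u ^ q ^ 2 + v ^ q ^ 2 + B * u ^ q ^ 3)
      = poly (linearized_poly q [A, 1, B * A ^ q ^ 2, B]) u + 2 * (B * v + v ^ q ^ 2)"
    by (simp add: poly_linearized_poly eval_nat_numeral algebra_simps)
  then show ?thesis
    using eq eq_conj CHAR_2_two_eq_0[OF char] by simp
qed

(* Ideal membership certificate: x a + b c + 1 plus an explicit combination of the four
   hypotheses equals 2 * (...). *)
lemma cyclic_relations_certificate:
  fixes x a b c :: "'a::comm_ring_1"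
  assumes char: "CHAR('a) = 2"
    and d0: "a * (a * b + x + 1) + (1 + c) * (1 + b * c) = 0"
    and d1: "b * (b * c + a + 1) + (1 + x) * (1 + c * x) = 0"
    and d2: "c * (c * x + b + 1) + (1 + a) * (1 + x * a) = 0"
    and d3: "x * (x * a + c + 1) + (1 + b) * (1 + a * b) = 0"
  shows "x * a + b * c + 1 = 0"
proof -
  have "x*a + b*c + 1
      + (x*a*c + x*c^2 + b*c + a + c + 1) * (a*(a*b + x + 1) + (1 + c)*(1 + b*c))
      + a^2 * (b*(b*c + a + 1) + (1 + x)*(1 + c*x))
      + (a*b*c + b*c^2 + b*c) * (c*(c*x + b + 1) + (1 + a)*(1 + x*a))
      + c^2 * (x*(x*a + c + 1) + (1 + b)*(1 + a*b))
    = 2 * (1 + c + c^2 + 2*b*c + 3*b*c^2 + b*c^3 + b^2*c^2 + b^2*c^3 + a + a*c + 2*a*b*c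
        + 2*a*b*c^2 + a*b^2*c^2 + a^2 + a^2*b + a^2*b*c + a^2*b^2*c + a^3*b + x*c^2 + x*c^3
        + x*b*c^3 + x*b*c^4 + x*a + x*a*c + x*a*c^2 + x*a*b*c + x*a*b*c^2 + x*a*b*c^3 + x*a^2
        + x*a^2*c + x*a^2*b*c + x*a^2*b*c^2 + x*a^3*b*c + x^2*a*c^2 + x^2*a^2*c)"
    by (simp add: algebra_simps power2_eq_square power3_eq_cube numeral_eq_Suc)
  then show ?thesis
    using d0 d1 d2 d3 CHAR_2_two_eq_0[OF char] by simp
qed

lemma cube_root_of_unity_conj_ne_inverse:
  fixes B :: "'a::field"
  assumes char: "CHAR('a) = 2" and q: "q = 2 ^ h" and B: "B ^ 2 + B + 1 = 0"
  shows "B ^ q ^ 2 \<noteq> 1 / B"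
proof
  assume conj: "B ^ q ^ 2 = 1 / B"
  have B3: "B ^ 3 = 1"
  proof -
    have "B ^ 3 - 1 = (B - 1) * (B ^ 2 + B + 1)"
      by (simp add: algebra_simps power2_eq_square power3_eq_cube)
    with B show ?thesis
      by simp
  qed
  have "q ^ 2 = 2 ^ (2 * h)"
    unfolding q by (simp add: power_mult[symmetric] mult.commute)
  also have "\<dots> = 4 ^ h"
    by (simp add: power_mult)
  finally have "q ^ 2 = 4 ^ h" .
  moreover have "4 ^ h mod 3 = (1::nat)"
    using power_mod[of "4::nat" 3 h] by simp
  ultimately have "q ^ 2 = 3 * (4 ^ h div 3) + 1"
    by (metis div_mult_mod_eq mult.commute)
  then have "B ^ q ^ 2 = B"
    using B3 by (simp add: power_add power_mult)
  moreover have "B \<noteq> 0"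
    using B by auto
  ultimately have "B * B = 1"
    using conj by (simp add: field_simps)
  then have "B = 1"
    using B3 by (metis mult_1 power3_eq_cube)
  then show False
    using B CHAR_2_two_eq_0[OF char] by simp
qed

lemma degenerate_case_relation:
  fixes A B E F :: "'a::field"
  assumes char: "CHAR('a) = 2" and q: "q = 2 ^ h" and fermat: "\<And>x::'a. x ^ q ^ 4 = x"
    and "B \<noteq> 0" and B_inv: "1 / B = E ^ q ^ 2 * E ^ q ^ 3"
    and t0: "B * (E ^ q * F + A) + A = 0" and t1: "B * (F ^ q + E ^ q + 1) + 1 = 0"
    and t2: "B * (1 + E ^ q) + B * A ^ q ^ 2 = 0"
  shows "E ^ q * (E ^ q * E ^ q ^ 2 + E + 1) + (1 + E ^ q ^ 3) * (1 + E ^ q ^ 2 * E ^ q ^ 3) = 0"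
proof -
  note add_eq_0 = CHAR_2_add_eq_0_iff[OF char]
  note frob = freshmans_dream_2_pow[OF char q] freshmans_dream_2_pow[OF char q, of _ _ 1, simplified]
    power_mult_distrib power_power_pow fermat power_pow_reduce[OF fermat]
  have A_conj: "A ^ q ^ 2 = 1 + E ^ q"
    using t2 \<open>B \<noteq> 0\<close> add_eq_0 by (simp flip: distrib_left add.assoc)
  have A: "A = 1 + E ^ q ^ 3"
    using arg_cong[of _ _ "\<lambda>x. x ^ q ^ 2", OF A_conj] by (simp add: frob)
  have "B * (F ^ q + E ^ q + 1) = 1"
    using t1 add_eq_0 by simp
  then have "F ^ q + (E ^ q + 1) = 1 / B"
    using \<open>B \<noteq> 0\<close> by (simp add: eq_divide_eq mult.commute add.assoc)
  then have F_conj: "F ^ q = E ^ q ^ 2 * E ^ q ^ 3 + (E ^ q + 1)"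
    unfolding CHAR_2_add_eq_iff[OF char] B_inv .
  have F: "F = E ^ q * E ^ q ^ 2 + E + 1"
    using arg_cong[of _ _ "\<lambda>x. x ^ q ^ 3", OF F_conj] by (simp add: frob)
  have "B * (E ^ q * F + A) = A"
    using t0 add_eq_0 by simp
  then have "E ^ q * F + A = A * (1 / B)"
    using \<open>B \<noteq> 0\<close> by (simp add: eq_divide_eq mult.commute)
  then have "(E ^ q * F + A) + A * (E ^ q ^ 2 * E ^ q ^ 3) = 0"
    unfolding add_eq_0 B_inv .
  moreover have "(E ^ q * F + A) + A * (E ^ q ^ 2 * E ^ q ^ 3)
      = E ^ q * (E ^ q * E ^ q ^ 2 + E + 1) + (1 + E ^ q ^ 3) * (1 + E ^ q ^ 2 * E ^ q ^ 3)"
    by (simp add: A F algebra_simps)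
  ultimately show ?thesis
    by simp
qed

lemma degenerate_case_coefficient_nonzero:
  fixes A B E F :: "'a::field"
  assumes char: "CHAR('a) = 2" and q: "q = 2 ^ h" and fermat: "\<And>x::'a. x ^ q ^ 4 = x"
    and "B \<noteq> 0" and B_conj: "B ^ q ^ 2 = 1 / B" and K: "B + E ^ (q + 1) = 0"
  shows "\<exists>c\<in>set [B * (E ^ q * F + A) + A, B * (F ^ q + E ^ q + 1) + 1, B * (1 + E ^ q) + B * A ^ q ^ 2].
           c \<noteq> 0"
proof (rule ccontr)
  assume "\<not> ?thesis"
  then have t: "B * (E ^ q * F + A) + A = 0" "B * (F ^ q + E ^ q + 1) + 1 = 0"
    "B * (1 + E ^ q) + B * A ^ q ^ 2 = 0"
    by auto
  note frob = freshmans_dream_2_pow[OF char q] freshmans_dream_2_pow[OF char q, of _ _ 1, simplified]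
    power_mult_distrib power_power_pow fermat power_pow_reduce[OF fermat]
  have B_E: "B = E * E ^ q"
    using K CHAR_2_add_eq_0_iff[OF char] by simp
  have B_inv: "1 / B = E ^ q ^ 2 * E ^ q ^ 3"
    using B_conj by (simp add: B_E frob)
  have conj_zero: "x ^ q = 0" if "x = 0" for x :: 'a
    using that q by (simp add: zero_power)
  have d0: "E ^ q * (E ^ q * E ^ q ^ 2 + E + 1) + (1 + E ^ q ^ 3) * (1 + E ^ q ^ 2 * E ^ q ^ 3) = 0"
    by (rule degenerate_case_relation[OF char q fermat \<open>B \<noteq> 0\<close> B_inv t])
  have d1: "E ^ q ^ 2 * (E ^ q ^ 2 * E ^ q ^ 3 + E ^ q + 1) + (1 + E) * (1 + E ^ q ^ 3 * E) = 0"
    using conj_zero[OF d0] by (simp add: frob)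
  have d2: "E ^ q ^ 3 * (E ^ q ^ 3 * E + E ^ q ^ 2 + 1) + (1 + E ^ q) * (1 + E * E ^ q) = 0"
    using conj_zero[OF d1] by (simp add: frob)
  have d3: "E * (E * E ^ q + E ^ q ^ 3 + 1) + (1 + E ^ q ^ 2) * (1 + E ^ q * E ^ q ^ 2) = 0"
    using conj_zero[OF d2] by (simp add: frob)
  have "E * E ^ q + E ^ q ^ 2 * E ^ q ^ 3 + 1 = 0"
    by (rule cyclic_relations_certificate[OF char d0 d1 d2 d3])
  then have "B + 1 / B + 1 = 0"
    unfolding B_inv by (simp add: B_E)
  then have "B * (B + 1 / B + 1) = 0"
    by simp
  then have "B ^ 2 + B + 1 = 0"
    using \<open>B \<noteq> 0\<close> by (simp add: algebra_simps power2_eq_square)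
  with cube_root_of_unity_conj_ne_inverse[OF char q] B_conj show False
    by blast
qed

lemma solution_set_eliminated:
  fixes A B C D E F :: "'a::field"
  assumes char: "CHAR('a) = 2" and q: "q = 2 ^ h" and fermat: "\<And>x::'a. x ^ q ^ 4 = x"
    and "B \<noteq> 0" and B_conj: "B ^ q ^ 2 = 1 / B" and E: "E = B + D" and F: "F = A + C"
    and "(u, v) \<in> solution_set q A B C D"
  shows "poly (linearized_poly q [A, 1, B * A ^ q ^ 2, B]) u = 0"
    and "(B + E ^ (q + 1)) * v
      + poly (linearized_poly q [E ^ q * F + A, F ^ q + E ^ q + 1, 1 + E ^ q, 1]) u = 0"
    and "v ^ q + poly [:u ^ q ^ 2 + u ^ q + F * u, E:] v = 0"
proof -
  from assms(8) have eq1: "v ^ q ^ 2 + A * u + B * v + u ^ q = 0"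
    and eq2: "v ^ q ^ 2 + u ^ q ^ 2 + v ^ q + C * u + D * v = 0"
    by (auto simp: solution_set_def)
  have sum: "v ^ q + E * v + (u ^ q ^ 2 + u ^ q + F * u) = 0"
    by (rule solution_sum_equation[OF char E F eq1 eq2])
  have "B * B ^ q ^ 2 = 1"
    using B_conj \<open>B \<noteq> 0\<close> by simp
  then show "poly (linearized_poly q [A, 1, B * A ^ q ^ 2, B]) u = 0"
    by (rule solution_free_of_v[OF char q fermat _ eq1])
  show "(B + E ^ (q + 1)) * v
      + poly (linearized_poly q [E ^ q * F + A, F ^ q + E ^ q + 1, 1 + E ^ q, 1]) u = 0"
    by (rule solution_linear_in_v[OF char q eq1 sum])
  show "v ^ q + poly [:u ^ q ^ 2 + u ^ q + F * u, E:] v = 0"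
    using sum by (simp add: algebra_simps)
qed

lemma card_solution_set_le_generic:
  fixes A B C D E F :: "'a::{field, finite}"
  assumes char: "CHAR('a) = 2" and q: "q = 2 ^ h" and "1 < q" and fermat: "\<And>x::'a. x ^ q ^ 4 = x"
    and "B \<noteq> 0" and B_conj: "B ^ q ^ 2 = 1 / B" and E: "E = B + D" and F: "F = A + C"
    and K: "B + E ^ (q + 1) \<noteq> 0"
  shows "card (solution_set q A B C D) \<le> q ^ 3"
proof -
  let ?S = "linearized_poly q [A, 1, B * A ^ q ^ 2, B]"
  let ?P = "linearized_poly q [E ^ q * F + A, F ^ q + E ^ q + 1, 1 + E ^ q, 1]"
  have "card (solution_set q A B C D) \<le> card {(u, v). poly ?S u = 0 \<and> (B + E ^ (q + 1)) * v + poly ?P u = 0}"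
    using solution_set_eliminated[OF char q fermat \<open>B \<noteq> 0\<close> B_conj E F] by (intro card_mono) auto
  also have "\<dots> \<le> q ^ 3"
    using card_linearized_graph_le[OF \<open>1 < q\<close> _ K, of "[A, 1, B * A ^ q ^ 2, B]" "poly ?P"]
    by (simp add: power3_eq_cube)
  finally show ?thesis .
qed

lemma card_solution_set_le_degenerate:
  fixes A B C D E F :: "'a::{field, finite}"
  assumes char: "CHAR('a) = 2" and q: "q = 2 ^ h" and "1 < q" and fermat: "\<And>x::'a. x ^ q ^ 4 = x"
    and "B \<noteq> 0" and B_conj: "B ^ q ^ 2 = 1 / B" and E: "E = B + D" and F: "F = A + C"
    and K: "B + E ^ (q + 1) = 0"
  shows "card (solution_set q A B C D) \<le> q ^ 3"
proof -
  let ?S = "linearized_poly q [A, 1, B * A ^ q ^ 2, B]"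
  let ?P = "linearized_poly q [E ^ q * F + A, F ^ q + E ^ q + 1, 1 + E ^ q, 1]"
  define G where "G u = [:u ^ q ^ 2 + u ^ q + F * u, E:]" for u
  (* B P + S: the terms in u^(q^3) cancel *)
  define T where "T = linearized_poly q
    [B * (E ^ q * F + A) + A, B * (F ^ q + E ^ q + 1) + 1, B * (1 + E ^ q) + B * A ^ q ^ 2]"
  have T: "poly T u = B * poly ?P u + poly ?S u" for u
  proof -
    have "B * poly ?P u + poly ?S u = poly T u + 2 * (B * u ^ q ^ 3)"
      by (simp add: T_def poly_linearized_poly eval_nat_numeral algebra_simps)
    then show ?thesis
      using CHAR_2_two_eq_0[OF char] by simp
  qed
  have "card (solution_set q A B C D) \<le> card {(u, v). poly T u = 0 \<and> v ^ q + poly (G u) v = 0}"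
    using solution_set_eliminated[OF char q fermat \<open>B \<noteq> 0\<close> B_conj E F] K
    by (intro card_mono) (auto simp: T G_def)
  also have "\<dots> \<le> q ^ 2 * q"
  proof -
    have "degree (G u) < q" for u
      using \<open>1 < q\<close> by (simp add: G_def)
    with card_linearized_fibred_le[OF \<open>1 < q\<close>
        degenerate_case_coefficient_nonzero[OF char q fermat \<open>B \<noteq> 0\<close> B_conj K]]
    show ?thesis
      by (simp add: T_def power2_eq_square)
  qed
  finally show ?thesis
    by (simp add: power3_eq_cube power2_eq_square)
qed

theorem proposition4p3:
  fixes h :: nat and q :: nat and A B C D :: "'a :: {field, finite}"
  assumes "q = 2 ^ h"
    and "card (UNIV :: 'a set) = q ^ 4"
    and "B \<noteq> 0"
    and "B ^ (q ^ 2) = 1 / B"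
  shows "card {(u, v). 
            v ^ (q ^ 2) + A * u + B * v + u ^ q = 0 \<and>
            v ^ (q ^ 2) + u ^ (q ^ 2) + v ^ q + C * u + D * v = 0} \<le> q ^ 3"
proof -
  have char: "CHAR('a) = 2"
    using assms(1,2) by (intro CHAR_eq_2_if_card_UNIV_power_2[of "h * 4"]) (simp add: power_mult)
  have fermat: "x ^ q ^ 4 = x" for x :: 'a
    using finite_field_power_card_eq_self[of x] assms(2) by simp
  have "2 \<le> card (UNIV :: 'a set)"
    using card_mono[of UNIV "{0::'a, 1}"] by simp
  then have "h \<noteq> 0"
    using assms(1,2) by (cases h) simp_all
  then have "1 < q"
    using assms(1) one_less_power[of "2::nat" h] by simp
  note hyps = char assms(1) \<open>1 < q\<close> fermat assms(3,4) refl refl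
  have "card (solution_set q A B C D) \<le> q ^ 3"
    using card_solution_set_le_generic[OF hyps] card_solution_set_le_degenerate[OF hyps] by blast
  then show ?thesis
    by (simp add: solution_set_def)
qed

end
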